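(* Let $R$ be a ring, $n$ a positive integer, and let $I$ be a weakly $n$-absorbing ideal of $R$ that is not an $n$-absorbing ideal. Then: (1) $I^{n+1}=\{0\}$; (2) $\sqrt{I}=\mathrm{Nil}(R)$; (3) if $M$ is an $R$-module with $IM=M$, then $M=\{0\}$.
   Context: All rings are commutative with $1\neq0$. A proper ideal $I$ of $R$ is $n$-absorbing if whenever $a_1\cdots a_{n+1}\in I$ with $a_1,\dots,a_{n+1}\in R$, there are $n$ of the $a_i$'s whose product is in $I$; it is weakly $n$-absorbing if this holds whenever $0\neq a_1\cdots a_{n+1}\in I$. $\mathrm{Nil}(R)$ is the ideal of nilpotent elements of $R$. *)

theory Defs
  imports Main "HOL.Modules"
begin

definition is_ideal :: "'a::comm_ring_1 set \<Rightarrow> bool" where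
  "is_ideal I \<longleftrightarrow> 0 \<in> I \<and> (\<forall>x\<in>I. \<forall>y\<in>I. x + y \<in> I) \<and> (\<forall>r. \<forall>x\<in>I. r * x \<in> I)"

definition proper_ideal :: "'a::comm_ring_1 set \<Rightarrow> bool" where
  "proper_ideal I \<longleftrightarrow> is_ideal I \<and> I \<noteq> UNIV"

definition n_absorbing :: "nat \<Rightarrow> 'a::comm_ring_1 set \<Rightarrow> bool" where
  "n_absorbing n I \<longleftrightarrow> proper_ideal I \<and>
     (\<forall>a :: nat \<Rightarrow> 'a. (\<Prod>i\<in>{0..n}. a i) \<in> I \<longrightarrow>
        (\<exists>j\<in>{0..n}. (\<Prod>i\<in>{0..n} - {j}. a i) \<in> I))"

definition weakly_n_absorbing :: "nat \<Rightarrow> 'a::comm_ring_1 set \<Rightarrow> bool" where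
  "weakly_n_absorbing n I \<longleftrightarrow> proper_ideal I \<and>
     (\<forall>a :: nat \<Rightarrow> 'a. (\<Prod>i\<in>{0..n}. a i) \<noteq> 0 \<longrightarrow> (\<Prod>i\<in>{0..n}. a i) \<in> I \<longrightarrow>
        (\<exists>j\<in>{0..n}. (\<Prod>i\<in>{0..n} - {j}. a i) \<in> I))"

definition ideal_gen :: "'a::comm_ring_1 set \<Rightarrow> 'a set" where
  "ideal_gen S = \<Inter>{J. is_ideal J \<and> S \<subseteq> J}"

definition ideal_power :: "'a::comm_ring_1 set \<Rightarrow> nat \<Rightarrow> 'a set" where
  "ideal_power I k = ideal_gen {prod_list xs | xs. length xs = k \<and> set xs \<subseteq> I}"

definition radical :: "'a::comm_ring_1 set \<Rightarrow> 'a set" where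
  "radical I = {x. \<exists>m::nat. x ^ m \<in> I}"

definition nilradical :: "'a::comm_ring_1 set" where
  "nilradical = {x. \<exists>m::nat. x ^ m = 0}"

(* IM for an R-module M (carrier = the type 'b, scalar multiplication scale):
   the submodule generated by all a\<cdot>m with a \<in> I, m \<in> M *)
definition ideal_smult :: "('a::comm_ring_1 \<Rightarrow> 'b::ab_group_add \<Rightarrow> 'b) \<Rightarrow> 'a set \<Rightarrow> 'b set" where
  "ideal_smult scale I = module.span scale {scale a m | a m. a \<in> I}"

end

theory Submission
  imports Defs
begin

text \<open>Since \<open>I\<close> is not \<open>n\<close>-absorbing there are \<open>a\<^sub>0, \<dots>, a\<^sub>n\<close> with product in \<open>I\<close> such that no
product of \<open>n\<close> of them lies in \<open>I\<close>; weak absorption forces their product to be \<open>0\<close>. Replacing the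
factors indexed by any set \<open>S\<close> by elements \<open>x\<^sub>i \<in> I\<close> still gives product \<open>0\<close>, by induction on \<open>S\<close>:
expanding the product of the \<open>a\<^sub>i + x\<^sub>i\<close> (\<open>i \<in> S\<close>) and \<open>a\<^sub>i\<close> (\<open>i \<notin> S\<close>), every term except the one
with all \<open>x\<^sub>i\<close> vanishes by induction, so a nonzero value would be a nonzero element of \<open>I\<close> whose
factors agree with the \<open>a\<^sub>i\<close> modulo \<open>I\<close>, and weak absorption would put a product of \<open>n\<close> of the
\<open>a\<^sub>i\<close> into \<open>I\<close>. For \<open>S = {0..n}\<close> this says that all products of \<open>n + 1\<close> elements of \<open>I\<close> vanish,
which gives \<open>I\<^sup>n\<^sup>+\<^sup>1 = 0\<close> and \<open>\<surd>I = Nil(R)\<close>, and \<open>M = IM = I\<^sup>n\<^sup>+\<^sup>1M = 0\<close> for a module with \<open>IM = M\<close>.\<close>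

definition ideal_products :: "'a::comm_ring_1 set \<Rightarrow> nat \<Rightarrow> 'a set" where
  "ideal_products I k = {\<Prod>i<k. x i | x. \<forall>i<k. x i \<in> I}"

lemma ideal_products_0 [simp]: "ideal_products I 0 = {1}"
  by (auto simp: ideal_products_def)

lemma ideal_products_mult:
  assumes "p \<in> ideal_products I k" and "c \<in> I"
  shows "p * c \<in> ideal_products I (Suc k)"
proof -
  obtain x where x: "p = (\<Prod>i<k. x i)" "\<forall>i<k. x i \<in> I"
    using assms(1) by (auto simp: ideal_products_def)
  have "p * c = (\<Prod>i<Suc k. (x(k := c)) i)" using x by simp
  moreover have "\<forall>i<Suc k. (x(k := c)) i \<in> I" using x assms(2) by auto
  ultimately show ?thesis unfolding ideal_products_def by blast
qed

lemma prod_list_eq_prod_nth: "prod_list (xs :: 'a::comm_monoid_mult list) = (\<Prod>i<length xs. xs ! i)"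
  by (induction xs) (simp_all del: prod.lessThan_Suc add: prod.lessThan_Suc_shift)

lemma prod_list_in_ideal_products:
  "length xs = k \<Longrightarrow> set xs \<subseteq> I \<Longrightarrow> prod_list xs \<in> ideal_products I k"
  by (auto simp: ideal_products_def prod_list_eq_prod_nth intro!: exI[of _ "(!) xs"])

lemma power_in_ideal_products: "y \<in> I \<Longrightarrow> y ^ k \<in> ideal_products I k"
  by (auto simp: ideal_products_def intro!: exI[of _ "\<lambda>_. y"])

lemma is_ideal_diff: "is_ideal I \<Longrightarrow> x \<in> I \<Longrightarrow> y \<in> I \<Longrightarrow> x - y \<in> I"
  unfolding is_ideal_def by (metis add_uminus_conv_diff mult_minus1)

lemma is_ideal_mult_right: "is_ideal I \<Longrightarrow> x \<in> I \<Longrightarrow> x * r \<in> I"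
  unfolding is_ideal_def by (metis mult.commute)

lemma is_ideal_prod:
  assumes "is_ideal I" and "finite A" and "k \<in> A" and "f k \<in> I"
  shows "prod f A \<in> I"
proof -
  have "prod f A = f k * prod f (A - {k})" using assms by (simp add: prod.remove)
  then show ?thesis using assms is_ideal_mult_right by metis
qed

lemma is_ideal_prod_diff:
  fixes I :: "'a::comm_ring_1 set"
  assumes I: "is_ideal I" and "finite A" and "\<forall>i\<in>A. c i - a i \<in> I"
  shows "prod c A - prod a A \<in> I"
  using assms(2,3)
proof (induction A rule: finite_induct)
  case empty
  then show ?case using I by (simp add: is_ideal_def)
next
  case (insert k A)
  have "prod c (insert k A) - prod a (insert k A)
      = a k * (prod c A - prod a A) + (c k - a k) * prod c A"
    using insert by (simp add: algebra_simps)
  moreover have "a k * (prod c A - prod a A) \<in> I" using insert I by (simp add: is_ideal_def)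
  moreover have "(c k - a k) * prod c A \<in> I" using insert I is_ideal_mult_right by auto
  ultimately show ?case using I by (simp add: is_ideal_def)
qed

lemma prod_add_restricted:
  fixes a x :: "'i \<Rightarrow> 'a::comm_semiring_1"
  assumes "finite N" and "S \<subseteq> N"
  shows "(\<Prod>i\<in>N. a i + (if i \<in> S then x i else 0))
    = (\<Sum>X\<in>Pow S. \<Prod>i\<in>N. if i \<in> X then x i else a i)"
proof -
  let ?g = "\<lambda>i. if i \<in> S then x i else 0"
  have "(\<Prod>i\<in>N. a i + ?g i) = (\<Sum>X\<in>Pow N. (\<Prod>i\<in>X. ?g i) * (\<Prod>i\<in>N - X. a i))"
    using assms(1) by (subst add.commute) (rule prod_add)
  also have "\<dots> = (\<Sum>X\<in>Pow S. (\<Prod>i\<in>X. ?g i) * (\<Prod>i\<in>N - X. a i))"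
  proof (rule sum.mono_neutral_right)
    show "\<forall>X\<in>Pow N - Pow S. (\<Prod>i\<in>X. ?g i) * (\<Prod>i\<in>N - X. a i) = 0"
    proof
      fix X assume "X \<in> Pow N - Pow S"
      then obtain k where "k \<in> X" "k \<notin> S" and "finite X"
        using assms(1) finite_subset by auto
      then have "(\<Prod>i\<in>X. ?g i) = 0" by (intro prod_zero) auto
      then show "(\<Prod>i\<in>X. ?g i) * (\<Prod>i\<in>N - X. a i) = 0" by simp
    qed
  qed (use assms in auto)
  also have "\<dots> = (\<Sum>X\<in>Pow S. \<Prod>i\<in>N. if i \<in> X then x i else a i)"
  proof (rule sum.cong)
    fix X assume "X \<in> Pow S"
    then have "X \<subseteq> N" and "(\<Prod>i\<in>X. ?g i) = (\<Prod>i\<in>X. x i)"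
      using assms(2) by (auto intro!: prod.cong)
    then show "(\<Prod>i\<in>X. ?g i) * (\<Prod>i\<in>N - X. a i) = (\<Prod>i\<in>N. if i \<in> X then x i else a i)"
      using assms(1) by (simp add: prod.If_cases Diff_eq Int_absorb1 Int_absorb2)
  qed simp
  finally show ?thesis .
qed

lemma weakly_n_absorbing_replace_factors:
  fixes I :: "'a::comm_ring_1 set" and a :: "nat \<Rightarrow> 'a"
  assumes W: "weakly_n_absorbing n I"
    and a_zero: "(\<Prod>i\<in>{0..n}. a i) = 0"
    and a_not: "\<forall>j\<in>{0..n}. (\<Prod>i\<in>{0..n} - {j}. a i) \<notin> I"
    and S: "S \<subseteq> {0..n}" and x: "\<forall>i\<in>S. x i \<in> I"
  shows "(\<Prod>i\<in>{0..n}. if i \<in> S then x i else a i) = 0"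
  using finite_subset[OF S finite_atLeastAtMost] S x
proof (induction S rule: finite_psubset_induct)
  case (psubset S)
  let ?N = "{0..n}" and ?z = "\<Prod>i\<in>{0..n}. if i \<in> S then x i else a i"
  have I: "is_ideal I" using W by (simp add: weakly_n_absorbing_def proper_ideal_def)
  show ?case
  proof (rule ccontr)
    assume nz: "?z \<noteq> 0"
    define b where "b i = a i + (if i \<in> S then x i else 0)" for i
    have "(\<Prod>i\<in>?N. b i) = (\<Sum>X\<in>Pow S. \<Prod>i\<in>?N. if i \<in> X then x i else a i)"
      unfolding b_def using psubset.prems by (intro prod_add_restricted) auto
    also have "\<dots> = ?z"
      using psubset by (subst sum.remove[of _ S]) (auto intro!: sum.neutral)
    finally have b_prod: "(\<Prod>i\<in>?N. b i) = ?z" .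
    obtain s where "s \<in> S" using nz a_zero by fastforce
    then have "?z \<in> I" using is_ideal_prod[OF I, of ?N s] psubset.prems by auto
    then obtain j where j: "j \<in> ?N" "(\<Prod>i\<in>?N - {j}. b i) \<in> I"
      using W nz b_prod unfolding weakly_n_absorbing_def by metis
    have "(\<Prod>i\<in>?N - {j}. b i) - (\<Prod>i\<in>?N - {j}. a i) \<in> I"
      using psubset.prems I by (intro is_ideal_prod_diff) (auto simp: b_def is_ideal_def)
    then have "(\<Prod>i\<in>?N - {j}. a i) \<in> I"
      using is_ideal_diff[OF I j(2)] by fastforce
    then show False using a_not j(1) by blast
  qed
qed

lemma weakly_n_absorbing_not_n_absorbing_products:
  fixes I :: "'a::comm_ring_1 set"
  assumes W: "weakly_n_absorbing n I" and "\<not> n_absorbing n I"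
  shows "ideal_products I (Suc n) \<subseteq> {0}"
proof
  fix p assume "p \<in> ideal_products I (Suc n)"
  then obtain x where p: "p = (\<Prod>i\<in>{0..n}. x i)" and x: "\<forall>i\<in>{0..n}. x i \<in> I"
    by (auto simp: ideal_products_def lessThan_Suc_atMost atLeast0AtMost)
  obtain a :: "nat \<Rightarrow> 'a" where a_in: "(\<Prod>i\<in>{0..n}. a i) \<in> I"
      and a_not: "\<forall>j\<in>{0..n}. (\<Prod>i\<in>{0..n} - {j}. a i) \<notin> I"
    using assms unfolding n_absorbing_def weakly_n_absorbing_def by blast
  then have "(\<Prod>i\<in>{0..n}. a i) = 0"
    using W unfolding weakly_n_absorbing_def by blast
  from weakly_n_absorbing_replace_factors[OF W this a_not order_refl x]
  show "p \<in> {0}" using p by simp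
qed

lemma ideal_power_eq_zero:
  assumes "ideal_products I k \<subseteq> {0}"
  shows "ideal_power I k = {0}"
proof -
  let ?G = "{prod_list xs | xs. length xs = k \<and> set xs \<subseteq> I}"
  have "?G \<subseteq> {0}" using assms prod_list_in_ideal_products by blast
  moreover have "is_ideal ({0} :: 'a set)" by (simp add: is_ideal_def)
  ultimately have "ideal_gen ?G \<subseteq> {0}" unfolding ideal_gen_def by blast
  moreover have "0 \<in> ideal_gen ?G" unfolding ideal_gen_def is_ideal_def by blast
  ultimately show ?thesis unfolding ideal_power_def by blast
qed

lemma radical_eq_nilradical:
  assumes I: "is_ideal I" and "ideal_products I k \<subseteq> {0}"
  shows "radical I = nilradical"
proof
  show "radical I \<subseteq> nilradical"
  proof
    fix y assume "y \<in> radical I"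
    then obtain m where "y ^ m \<in> I" by (auto simp: radical_def)
    then have "(y ^ m) ^ k = 0" using assms(2) power_in_ideal_products by blast
    then show "y \<in> nilradical" unfolding nilradical_def power_mult[symmetric] by blast
  qed
  show "nilradical \<subseteq> radical I"
    using I unfolding nilradical_def radical_def is_ideal_def by auto metis
qed

context module
begin

lemma span_scale_ideal_products:
  assumes IM: "ideal_smult scale I = UNIV"
  shows "span {scale p m | p m. p \<in> ideal_products I k} = UNIV"
proof (induction k)
  case 0
  show ?case by (auto intro: span_base exI[of _ 1])
next
  case (Suc k)
  let ?T = "span {scale p m | p m. p \<in> ideal_products I (Suc k)}"
  have "scale p m \<in> ?T" if p: "p \<in> ideal_products I k" for p m
  proof -
    let ?G = "{scale c m | c m. c \<in> I}"
    have "scale p ` ?G \<subseteq> {scale p m | p m. p \<in> ideal_products I (Suc k)}"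
      using ideal_products_mult[OF p] by fastforce
    then have "span (scale p ` ?G) \<subseteq> ?T" by (rule span_mono)
    moreover have "m \<in> span ?G" using IM by (simp add: ideal_smult_def)
    ultimately show ?thesis
      using module_hom.span_image[OF module_hom_scale_self, of p ?G] by auto
  qed
  then have "span {scale p m | p m. p \<in> ideal_products I k} \<subseteq> ?T"
    by (intro span_minimal) auto
  then show ?case using Suc by auto
qed

lemma trivial_if_ideal_smult_eq_UNIV:
  assumes "ideal_smult scale I = UNIV" and "ideal_products I k \<subseteq> {0}"
  shows "(UNIV :: 'b set) = {0}"
proof -
  have "{scale p m | p m. p \<in> ideal_products I k} \<subseteq> {0}" using assms(2) by auto
  then have "span {scale p m | p m. p \<in> ideal_products I k} \<subseteq> {0}"
    by (intro span_minimal) simp_all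
  then show ?thesis using span_scale_ideal_products[OF assms(1)] by auto
qed

end

theorem mainTheorem5:
  fixes I :: "'a::comm_ring_1 set" and n :: nat
    and scale :: "'a \<Rightarrow> 'b::ab_group_add \<Rightarrow> 'b"
  assumes "n \<ge> 1"
    and "weakly_n_absorbing n I"
    and "\<not> n_absorbing n I"
  shows "ideal_power I (n + 1) = {0}
    \<and> radical I = nilradical
    \<and> (module scale \<longrightarrow> ideal_smult scale I = UNIV \<longrightarrow> (UNIV :: 'b set) = {0})"
proof -
  have I: "is_ideal I"
    using assms(2) by (simp add: weakly_n_absorbing_def proper_ideal_def)
  have products: "ideal_products I (n + 1) \<subseteq> {0}"
    using weakly_n_absorbing_not_n_absorbing_products[OF assms(2,3)] by simp
  show ?thesis
    using ideal_power_eq_zero[OF products] radical_eq_nilradical[OF I products]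
      module.trivial_if_ideal_smult_eq_UNIV[OF _ _ products] by blast
qed

end
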